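(* Let $m,n$ be positive integers and $(A,\boldsymbol{\gamma})\in[0,1)^{m\times n}\times[0,1)^m$. If $\langle A\boldsymbol{q}-\boldsymbol{\gamma}\rangle>0$ for every $\boldsymbol{q}\in\mathbb{Z}^n\setminus\{\boldsymbol{0}\}$, then $(A,\boldsymbol{\gamma})\in\Omega(m,n)$ if and only if $S_1(A,\boldsymbol{\gamma})<+\infty$.
   Context: $[0,1)^{m\times n}$ is the set of real $m\times n$ matrices with entries in $[0,1)$. For $\boldsymbol{x}\in\mathbb{R}^n$, $\|\boldsymbol{x}\|=\max_i|x_i|$; for $\boldsymbol{y}\in\mathbb{R}^m$, $\langle\boldsymbol{y}\rangle=\min_{\boldsymbol{p}\in\mathbb{Z}^m}\|\boldsymbol{y}-\boldsymbol{p}\|$. For $\psi:\mathbb{N}\to[0,\infty)$, $W_{m,n}(\psi)$ is the set of pairs $(A,\boldsymbol{\gamma})$ such that $\langle A\boldsymbol{q}-\boldsymbol{\gamma}\rangle<\psi(\|\boldsymbol{q}\|)$ for infinitely many $\boldsymbol{q}\in\mathbb{Z}^n$. "Decreasing" means non-increasing. $\mathcal{D}$ is the set of decreasing $\psi:\mathbb{N}\to[0,\infty)$ with $\sum_{q\ge1}q^{n-1}\psi(q)^m=\infty$; $\Omega(m,n)=\bigcap_{\psi\in\mathcal{D}}W_{m,n}(\psi)$. $S_1(A,\boldsymbol{\gamma})=\sum_{t=1}^\infty t^{n-1}\min_{\boldsymbol{q}\in\mathbb{Z}^n,\ 1\le\|\boldsymbol{q}\|\le t}\langle A\boldsymbol{q}-\boldsymbol{\gamma}\rangle^m$.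 *)

theory Defs
  imports "HOL-Analysis.Analysis"
begin

definition znorm :: "int ^ 'n \<Rightarrow> nat" where
  "znorm q = Max (range (\<lambda>i. nat \<bar>q $ i\<bar>))"

definition rnorm :: "real ^ 'm \<Rightarrow> real" where
  "rnorm y = Max (range (\<lambda>i. \<bar>y $ i\<bar>))"

definition dZ :: "real ^ 'm \<Rightarrow> real" where
  "dZ y = Inf {rnorm (y - (\<chi> i. of_int (p $ i))) | p :: int ^ 'm. True}"

definition intvec :: "int ^ 'n \<Rightarrow> real ^ 'n" where
  "intvec q = (\<chi> i. of_int (q $ i))"

definition W :: "(nat \<Rightarrow> real) \<Rightarrow> ((real ^ 'n ^ 'm) \<times> (real ^ 'm)) set" where
  "W \<psi> = {(A, \<gamma>). infinite {q :: int ^ 'n. dZ (A *v intvec q - \<gamma>) < \<psi> (znorm q)}}"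

definition Dcls :: "nat \<Rightarrow> nat \<Rightarrow> (nat \<Rightarrow> real) set" where
  "Dcls m n = {\<psi>. (\<forall>q\<ge>1. 0 \<le> \<psi> q) \<and> (\<forall>a b. 1 \<le> a \<longrightarrow> a \<le> b \<longrightarrow> \<psi> b \<le> \<psi> a)
      \<and> \<not> summable (\<lambda>q. real (Suc q) ^ (n - 1) * \<psi> (Suc q) ^ m)}"

definition Omega :: "((real ^ 'n ^ 'm) \<times> (real ^ 'm)) set" where
  "Omega = (\<Inter>\<psi>\<in>Dcls CARD('m) CARD('n). W \<psi>)"

definition S1_term :: "real ^ 'n ^ 'm \<Rightarrow> real ^ 'm \<Rightarrow> nat \<Rightarrow> real" where
  "S1_term A \<gamma> t = real t ^ (CARD('n) - 1) *
     (Min ((\<lambda>q :: int ^ 'n. dZ (A *v intvec q - \<gamma>)) ` {q. 1 \<le> znorm q \<and> znorm q \<le> t})) ^ CARD('m)"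

text \<open>S_1(A, gamma) < +infinity (sum over t >= 1 of nonnegative terms).\<close>
definition S1_finite :: "real ^ 'n ^ 'm \<Rightarrow> real ^ 'm \<Rightarrow> bool" where
  "S1_finite A \<gamma> \<longleftrightarrow> summable (\<lambda>t. S1_term A \<gamma> (Suc t))"

end

theory Submission
  imports Defs
begin

text \<open>Let \<open>\<Phi>(t)\<close> be the least value of \<open>\<langle>Aq - \<gamma>\<rangle>\<close> over \<open>1 \<le> \<parallel>q\<parallel> \<le> t\<close>, so that
  \<open>S\<^sub>1 = \<Sum> t\<^sup>n\<^sup>-\<^sup>1 \<Phi>(t)\<^sup>m\<close>. The function \<open>\<Phi>\<close> is non-increasing, and no \<open>q \<noteq> 0\<close> satisfies
  \<open>\<langle>Aq - \<gamma>\<rangle> < \<Phi>(\<parallel>q\<parallel>)\<close>. Hence if \<open>S\<^sub>1 = \<infinity>\<close>, then \<open>\<Phi> \<in> \<D>\<close> witnesses \<open>(A, \<gamma>) \<notin> \<Omega>\<close>.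
  Conversely, if \<open>S\<^sub>1 < \<infinity>\<close> then \<open>\<Phi>(t) \<rightarrow> 0\<close>. Suppose a non-increasing \<open>\<psi>\<close> had only finitely
  many solutions \<open>q\<close>. As \<open>\<langle>Aq - \<gamma>\<rangle> > 0\<close> for \<open>q \<noteq> 0\<close>, eventually \<open>\<psi>(t) \<le> \<Phi>(t)\<close>: a minimiser
  \<open>q\<close> for \<open>\<Phi>(t)\<close> with \<open>\<Phi>(t) < \<psi>(t) \<le> \<psi>(\<parallel>q\<parallel>)\<close> would be a solution whose error lies below
  all the finitely many positive errors of solutions. Comparison with \<open>S\<^sub>1\<close> then gives \<open>\<psi> \<notin> \<D>\<close>.\<close>

definition best_approx :: "(int ^ 'n \<Rightarrow> real) \<Rightarrow> nat \<Rightarrow> real" where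
  "best_approx f t = Min (f ` {q. 1 \<le> znorm q \<and> znorm q \<le> t})"

lemma znorm_le_iff: "znorm (q :: int ^ 'n) \<le> t \<longleftrightarrow> (\<forall>i. nat \<bar>q $ i\<bar> \<le> t)"
  unfolding znorm_def by (subst Max_le_iff) auto

lemma one_le_znorm_iff: "1 \<le> znorm (q :: int ^ 'n) \<longleftrightarrow> q \<noteq> 0"
proof -
  have "1 \<le> znorm q \<longleftrightarrow> (\<exists>i. 1 \<le> nat \<bar>q $ i\<bar>)"
    unfolding znorm_def by (subst Max_ge_iff) auto
  also have "\<dots> \<longleftrightarrow> (\<exists>i. q $ i \<noteq> 0)"
    by (auto simp: Suc_le_eq)
  finally show ?thesis
    by (auto simp: vec_eq_iff)
qed

lemma finite_znorm_le: "finite {q :: int ^ 'n. znorm q \<le> t}"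
proof -
  let ?box = "PiE UNIV (\<lambda>_. {- int t..int t})"
  have "{q :: int ^ 'n. znorm q \<le> t} \<subseteq> vec_lambda ` ?box"
  proof
    fix q :: "int ^ 'n"
    assume "q \<in> {q. znorm q \<le> t}"
    then have "vec_nth q \<in> ?box"
      by (simp add: znorm_le_iff PiE_def extensional_def nat_le_iff abs_le_iff minus_le_iff)
    then show "q \<in> vec_lambda ` ?box"
      by (rule rev_image_eqI) simp
  qed
  moreover have "finite (vec_lambda ` ?box :: (int ^ 'n) set)"
    by (intro finite_imageI finite_PiE) auto
  ultimately show ?thesis
    by (rule finite_subset)
qed

lemma finite_znorm_between: "finite {q :: int ^ 'n. 1 \<le> znorm q \<and> znorm q \<le> t}"
  by (rule finite_subset[OF _ finite_znorm_le[of t]]) auto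

lemma best_approx_le:
  assumes "q \<noteq> 0" "znorm q \<le> t"
  shows "best_approx f t \<le> f q"
proof -
  have "q \<in> {q. 1 \<le> znorm q \<and> znorm q \<le> t}"
    using assms one_le_znorm_iff by blast
  then show ?thesis
    unfolding best_approx_def by (intro Min_le finite_imageI finite_znorm_between imageI)
qed

lemma best_approx_attained:
  fixes f :: "int ^ 'n \<Rightarrow> real"
  assumes "1 \<le> t"
  obtains q where "q \<noteq> 0" "znorm q \<le> t" "best_approx f t = f q"
proof -
  obtain i :: 'n where True by simp
  let ?e = "(\<chi> j. if j = i then 1 else 0) :: int ^ 'n"
  have "?e \<noteq> 0"
    by (auto simp: vec_eq_iff intro!: exI[of _ i])
  moreover have "znorm ?e \<le> t"
    using assms by (simp add: znorm_le_iff)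
  ultimately have "1 \<le> znorm ?e \<and> znorm ?e \<le> t"
    using one_le_znorm_iff by blast
  then have "best_approx f t \<in> f ` {q. 1 \<le> znorm q \<and> znorm q \<le> t}"
    unfolding best_approx_def by (intro Min_in finite_imageI finite_znorm_between) blast+
  then show ?thesis
    using that one_le_znorm_iff by blast
qed

lemma best_approx_nonneg:
  assumes "\<And>q. 0 \<le> f q" "1 \<le> t"
  shows "0 \<le> best_approx f t"
  using best_approx_attained[OF assms(2), of f] assms(1) by metis

lemma best_approx_antimono:
  assumes "1 \<le> a" "a \<le> b"
  shows "best_approx f b \<le> best_approx f a"
proof -
  obtain q where "q \<noteq> 0" "znorm q \<le> a" "best_approx f a = f q"
    using best_approx_attained[OF assms(1)] .
  with assms(2) show ?thesis
    using best_approx_le[of q b f] by simp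
qed

lemma eventually_le_best_approx:
  fixes f :: "int ^ 'n \<Rightarrow> real"
  assumes \<psi>_antimono: "\<And>a b. 1 \<le> a \<Longrightarrow> a \<le> b \<Longrightarrow> \<psi> b \<le> \<psi> a"
    and finite_solutions: "finite {q. f q < \<psi> (znorm q)}"
    and f_pos: "\<And>q. q \<noteq> 0 \<Longrightarrow> 0 < f q"
    and best_approx_0: "(\<lambda>t. best_approx f (Suc t)) \<longlonglongrightarrow> 0"
  shows "\<forall>\<^sub>F t in sequentially. \<psi> (Suc t) \<le> best_approx f (Suc t)"
proof -
  let ?S = "{q. f q < \<psi> (znorm q)} - {0}"
  have "finite ?S"
    using finite_solutions by simp
  moreover have "\<forall>q\<in>?S. \<forall>\<^sub>F t in sequentially. best_approx f (Suc t) < f q"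
    using f_pos by (simp add: order_tendstoD(2)[OF best_approx_0])
  ultimately have "\<forall>\<^sub>F t in sequentially. \<forall>q\<in>?S. best_approx f (Suc t) < f q"
    by (rule eventually_ball_finite)
  then show ?thesis
  proof eventually_elim
    case (elim t)
    show ?case
    proof (rule ccontr)
      assume "\<not> \<psi> (Suc t) \<le> best_approx f (Suc t)"
      moreover obtain q where q: "q \<noteq> 0" "znorm q \<le> Suc t" "best_approx f (Suc t) = f q"
        using best_approx_attained[of "Suc t" f] by auto
      moreover have "\<psi> (Suc t) \<le> \<psi> (znorm q)"
        using q \<psi>_antimono one_le_znorm_iff by blast
      ultimately have "q \<in> ?S"
        using q(1) by simp
      with elim have "best_approx f (Suc t) < f q"
        by blast
      with q(3) show False
        by simp
    qed
  qed
qed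

lemma rnorm_nonneg: "0 \<le> rnorm y"
proof -
  have "\<bar>y $ i\<bar> \<le> rnorm y" for i
    unfolding rnorm_def by (rule Max_ge) auto
  then show ?thesis
    by (meson abs_ge_zero order_trans)
qed

lemma dZ_nonneg: "0 \<le> dZ y"
  unfolding dZ_def by (rule cInf_greatest) (auto simp: rnorm_nonneg)

lemma S1_term_eq_best_approx:
  fixes A :: "real ^ 'n ^ 'm"
  shows "S1_term A \<gamma> t =
    real t ^ (CARD('n) - 1) * best_approx (\<lambda>q. dZ (A *v intvec q - \<gamma>)) t ^ CARD('m)"
  unfolding S1_term_def best_approx_def ..

lemma best_approx_in_Dcls:
  fixes A :: "real ^ 'n ^ 'm"
  assumes "\<not> S1_finite A \<gamma>"
  shows "best_approx (\<lambda>q. dZ (A *v intvec q - \<gamma>)) \<in> Dcls CARD('m) CARD('n)"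
  using assms
  by (auto simp: Dcls_def S1_finite_def S1_term_eq_best_approx dZ_nonneg
      intro: best_approx_nonneg best_approx_antimono)

lemma best_approx_notin_W:
  fixes A :: "real ^ 'n ^ 'm"
  shows "(A, \<gamma>) \<notin> W (best_approx (\<lambda>q. dZ (A *v intvec q - \<gamma>)))"
proof -
  have "\<not> dZ (A *v intvec q - \<gamma>) < best_approx (\<lambda>q. dZ (A *v intvec q - \<gamma>)) (znorm q)"
    if "q \<noteq> 0" for q
    using best_approx_le[OF that order_refl, of "\<lambda>q. dZ (A *v intvec q - \<gamma>)"] by simp
  then have "{q. dZ (A *v intvec q - \<gamma>) < best_approx (\<lambda>q. dZ (A *v intvec q - \<gamma>)) (znorm q)} \<subseteq> {0}"
    by blast
  then show ?thesis
    unfolding W_def by (auto dest: finite_subset)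
qed

lemma best_approx_tendsto_0:
  fixes A :: "real ^ 'n ^ 'm"
  assumes "S1_finite A \<gamma>"
  shows "(\<lambda>t. best_approx (\<lambda>q. dZ (A *v intvec q - \<gamma>)) (Suc t)) \<longlonglongrightarrow> 0"
proof -
  let ?\<Phi> = "\<lambda>t. best_approx (\<lambda>q. dZ (A *v intvec q - \<gamma>)) (Suc t)"
  have \<Phi>_nonneg: "0 \<le> ?\<Phi> t" for t
    by (rule best_approx_nonneg) (simp_all add: dZ_nonneg)
  have \<Phi>_le_term: "?\<Phi> t ^ CARD('m) \<le> S1_term A \<gamma> (Suc t)" for t
  proof -
    have "1 * ?\<Phi> t ^ CARD('m) \<le> real (Suc t) ^ (CARD('n) - 1) * ?\<Phi> t ^ CARD('m)"
      using \<Phi>_nonneg[of t] by (intro mult_right_mono) simp_all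
    then show ?thesis
      by (simp only: S1_term_eq_best_approx mult_1)
  qed
  have term_0: "(\<lambda>t. S1_term A \<gamma> (Suc t)) \<longlonglongrightarrow> 0"
    using assms unfolding S1_finite_def by (rule summable_LIMSEQ_zero)
  have "(\<lambda>t. ?\<Phi> t ^ CARD('m)) \<longlonglongrightarrow> 0"
    by (rule tendsto_sandwich[OF always_eventually always_eventually tendsto_const term_0])
      (simp_all add: \<Phi>_nonneg \<Phi>_le_term)
  then show ?thesis
    by (simp only: power_tendsto_0_iff zero_less_card_finite)
qed

lemma S1_finite_imp_in_W:
  fixes A :: "real ^ 'n ^ 'm"
  assumes "S1_finite A \<gamma>"
    and "\<And>q. q \<noteq> 0 \<Longrightarrow> 0 < dZ (A *v intvec q - \<gamma>)"
    and "\<psi> \<in> Dcls CARD('m) CARD('n)"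
  shows "(A, \<gamma>) \<in> W \<psi>"
proof (rule ccontr)
  assume "(A, \<gamma>) \<notin> W \<psi>"
  then have finite_solutions: "finite {q. dZ (A *v intvec q - \<gamma>) < \<psi> (znorm q)}"
    unfolding W_def by simp
  note \<psi> = assms(3)[unfolded Dcls_def, simplified]
  have "\<forall>\<^sub>F t in sequentially.
      \<psi> (Suc t) \<le> best_approx (\<lambda>q. dZ (A *v intvec q - \<gamma>)) (Suc t)"
    using \<psi> finite_solutions assms(2) best_approx_tendsto_0[OF assms(1)]
    by (intro eventually_le_best_approx) simp_all
  then have "\<forall>\<^sub>F t in sequentially.
      norm (real (Suc t) ^ (CARD('n) - 1) * \<psi> (Suc t) ^ CARD('m)) \<le> S1_term A \<gamma> (Suc t)"
  proof eventually_elim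
    case (elim t)
    have "0 \<le> \<psi> (Suc t)"
      using \<psi> by simp
    with elim show ?case
      unfolding S1_term_eq_best_approx by (simp add: mult_left_mono power_mono)
  qed
  then have "summable (\<lambda>t. real (Suc t) ^ (CARD('n) - 1) * \<psi> (Suc t) ^ CARD('m))"
    using assms(1) unfolding S1_finite_def by (rule summable_comparison_test_ev)
  with \<psi> show False
    by simp
qed

theorem corollary2p1:
  fixes A :: "real ^ 'n ^ 'm" and \<gamma> :: "real ^ 'm"
  assumes "\<forall>i j. 0 \<le> A $ i $ j \<and> A $ i $ j < 1"
    and "\<forall>i. 0 \<le> \<gamma> $ i \<and> \<gamma> $ i < 1"
    and "\<forall>q :: int ^ 'n. q \<noteq> 0 \<longrightarrow> dZ (A *v intvec q - \<gamma>) > 0"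
  shows "(A, \<gamma>) \<in> Omega \<longleftrightarrow> S1_finite A \<gamma>"
proof
  assume "(A, \<gamma>) \<in> Omega"
  then show "S1_finite A \<gamma>"
    using best_approx_in_Dcls best_approx_notin_W unfolding Omega_def by blast
next
  assume "S1_finite A \<gamma>"
  then show "(A, \<gamma>) \<in> Omega"
    using S1_finite_imp_in_W assms(3) unfolding Omega_def by blast
qed

end
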